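(* $\mathsf{Seq}\vdash\forall x\,y\,\exists z\,\forall u\,\big[\,\exists v_1v_2[(v_1\vdash u)\circ v_2=z]\;\leftrightarrow\;\big(\exists v_1v_2[(v_1\vdash u)\circ v_2=x]\vee u=y\big)\,\big]$.
   Context: $\mathsf{Seq}$ is the theory in the language $\{e,\vdash,\circ\}$ ($e$ constant, $\vdash$ and $\circ$ binary functions) with axioms: ($\mathsf{Seq}_1$) $\forall xy[x\vdash y\neq e]$; ($\mathsf{Seq}_2$) $\forall x_1x_2y_1y_2[x_1\vdash x_2=y_1\vdash y_2\rightarrow(x_1=y_1\wedge x_2=y_2)]$; ($\mathsf{Seq}_3$) $\forall x[x\circ e=x]$; ($\mathsf{Seq}_4$) $\forall xyz[x\circ(y\vdash z)=(x\circ y)\vdash z]$; ($\mathsf{Seq}_5$) $\forall x[x=e\vee\exists yz[x=y\vdash z]]$. The claimed sentence is the translation of the adjunction axiom $\forall xy\exists z\forall u[u\in z\leftrightarrow(u\in x\vee u=y)]$ under $(x\in y)^\tau=\exists v_1v_2[(v_1\vdash x)\circ v_2=y]$. *)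

theory Defs
  imports Main
begin

text \<open>A structure (carrier = the type 'a) for the language {e, \<turnstile>, \<circ>}
  is given by a constant e, a binary function cns (for \<turnstile>) and a
  binary function cmp (for \<circ>). seq_model says it satisfies the axioms Seq1..Seq5.\<close>

definition seq_model :: "'a \<Rightarrow> ('a \<Rightarrow> 'a \<Rightarrow> 'a) \<Rightarrow> ('a \<Rightarrow> 'a \<Rightarrow> 'a) \<Rightarrow> bool" where
  "seq_model e cns cmp \<longleftrightarrow>
     (\<forall>x y. cns x y \<noteq> e) \<and>
     (\<forall>x1 x2 y1 y2. cns x1 x2 = cns y1 y2 \<longrightarrow> x1 = y1 \<and> x2 = y2) \<and>
     (\<forall>x. cmp x e = x) \<and>
     (\<forall>x y z. cmp x (cns y z) = cns (cmp x y) z) \<and>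
     (\<forall>x. x = e \<or> (\<exists>y z. x = cns y z))"

text \<open>Translated membership: (x \<in> y)^tau = \<exists>v1 v2. (v1 \<turnstile> x) \<circ> v2 = y.\<close>

definition seq_mem :: "('a \<Rightarrow> 'a \<Rightarrow> 'a) \<Rightarrow> ('a \<Rightarrow> 'a \<Rightarrow> 'a) \<Rightarrow> 'a \<Rightarrow> 'a \<Rightarrow> bool" where
  "seq_mem cns cmp x y \<longleftrightarrow> (\<exists>v1 v2. cmp (cns v1 x) v2 = y)"

end

theory Submission
  imports Defs
begin

text \<open>The sequence \<open>x \<turnstile> y\<close> is the witness: \<open>u\<close> occurs in it either as its last entry,
  or, by \<open>Seq\<^sub>4\<close> and injectivity of \<open>\<turnstile>\<close>, already in \<open>x\<close>.\<close>

lemma seq_modelD: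
  assumes "seq_model e cns cmp"
  shows seq_cns_inject: "cns x1 x2 = cns y1 y2 \<Longrightarrow> x1 = y1 \<and> x2 = y2"
    and seq_cmp_e: "cmp x e = x"
    and seq_cmp_cns: "cmp x (cns y z) = cns (cmp x y) z"
    and seq_cases: "x = e \<or> (\<exists>y z. x = cns y z)"
  using assms unfolding seq_model_def by blast+

lemma seq_mem_cns_iff:
  assumes seq: "seq_model e cns cmp"
  shows "seq_mem cns cmp u (cns x y) \<longleftrightarrow> seq_mem cns cmp u x \<or> u = y"
proof
  assume "seq_mem cns cmp u (cns x y)"
  then obtain v1 v2 where v: "cmp (cns v1 u) v2 = cns x y"
    unfolding seq_mem_def by blast
  consider "v2 = e" | a b where "v2 = cns a b"
    using seq_cases[OF seq] by blast
  then show "seq_mem cns cmp u x \<or> u = y"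
  proof cases
    case 1
    with v have "cns v1 u = cns x y" by (simp add: seq_cmp_e[OF seq])
    then show ?thesis using seq_cns_inject[OF seq] by blast
  next
    case (2 a b)
    with v have "cns (cmp (cns v1 u) a) b = cns x y" by (simp add: seq_cmp_cns[OF seq])
    then have "cmp (cns v1 u) a = x" using seq_cns_inject[OF seq] by blast
    then show ?thesis unfolding seq_mem_def by blast
  qed
next
  assume "seq_mem cns cmp u x \<or> u = y"
  then show "seq_mem cns cmp u (cns x y)"
  proof
    assume "seq_mem cns cmp u x"
    then obtain v1 v2 where "cmp (cns v1 u) v2 = x"
      unfolding seq_mem_def by blast
    then have "cmp (cns v1 u) (cns v2 y) = cns x y" by (simp add: seq_cmp_cns[OF seq])
    then show ?thesis unfolding seq_mem_def by blast
  next
    assume "u = y"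
    then have "cmp (cns x u) e = cns x y" by (simp add: seq_cmp_e[OF seq])
    then show ?thesis unfolding seq_mem_def by blast
  qed
qed

theorem lemma4:
  fixes e :: 'a and cns cmp :: "'a \<Rightarrow> 'a \<Rightarrow> 'a"
  assumes "seq_model e cns cmp"
  shows "\<forall>x y. \<exists>z. \<forall>u. seq_mem cns cmp u z \<longleftrightarrow> (seq_mem cns cmp u x \<or> u = y)"
proof (intro allI)
  fix x y
  show "\<exists>z. \<forall>u. seq_mem cns cmp u z \<longleftrightarrow> (seq_mem cns cmp u x \<or> u = y)"
    using seq_mem_cns_iff[OF assms, of _ x y] by (intro exI[of _ "cns x y"]) blast
qed

end
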